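(* Fix a vertex $v\in\mathbb{Z}_n$. For all $M,N\in\operatorname{CM}(A)$, the restriction map $\phi_v\colon\operatorname{Hom}_A(M,N)\to\operatorname{Hom}_Z(e_vM,e_vN)$, $f\mapsto f|_{e_vM}$, is injective, and its cokernel $K_v(M,N):=\operatorname{coker}\phi_v$ is a finite-dimensional $\mathbb{C}$-vector space. Thus there is a short exact sequence $0\to\operatorname{Hom}_A(M,N)\to\operatorname{Hom}_Z(e_vM,e_vN)\to K_v(M,N)\to 0$.
   Context: Fix integers $1\le m<n$. Let $Q$ be the quiver with vertex set $\mathbb{Z}_n$ and arrows $x_a\colon a-1\to a$ and $y_a\colon a\to a-1$ for $a\in\{1,\dots,n\}$. Let $A$ be the quotient of the complete path algebra $\widehat{\mathbb{C}Q}$ by the relations $xy=yx$ and $x^m=y^{n-m}$ at every vertex; its centre is $Z=\mathbb{C}[[t]]$, $t=xy$, and $e_j$ denotes the primitive idempotent at vertex $j$. $\operatorname{CM}(A)$ is the category of finitely generated $A$-modules that are free as $Z$-modules. *)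

theory Defs
  imports "HOL-Computational_Algebra.Formal_Power_Series" "Jordan_Normal_Form.Matrix"
begin

text \<open>Vertices of the quiver are the residues 0..n-1 (representing Z_n).
  An object of CM(A) is encoded as a representation of the quiver by free
  C[[t]]-modules of finite rank: rank r j at vertex j, with t acting as fps_X;
  X j : vertex j -> vertex (j+1) mod n is the arrow x_(j+1), and
  Y j : vertex (j+1) mod n -> vertex j is the arrow y_(j+1).
  Matrices act on column vectors.\<close>

definition vsucc :: "nat \<Rightarrow> nat \<Rightarrow> nat" where
  "vsucc n j = (j + 1) mod n"

definition vpred :: "nat \<Rightarrow> nat \<Rightarrow> nat" where
  "vpred n j = (j + (n - 1)) mod n"

fun xpath :: "nat \<Rightarrow> (nat \<Rightarrow> nat) \<Rightarrow> (nat \<Rightarrow> 'a::semiring_1 mat) \<Rightarrow> nat \<Rightarrow> nat \<Rightarrow> 'a mat" where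
  "xpath n r X j 0 = 1\<^sub>m (r j)"
| "xpath n r X j (Suc k) = X ((j + k) mod n) * xpath n r X j k"

text \<open>Product of k consecutive y-arrows starting at vertex j
  (path j -> j-1 -> ... -> j-k).\<close>
fun ypath :: "nat \<Rightarrow> (nat \<Rightarrow> nat) \<Rightarrow> (nat \<Rightarrow> 'a::semiring_1 mat) \<Rightarrow> nat \<Rightarrow> nat \<Rightarrow> 'a mat" where
  "ypath n r Y j 0 = 1\<^sub>m (r j)"
| "ypath n r Y j (Suc k) = Y ((j + Suc k * (n - 1)) mod n) * ypath n r Y j k"

definition is_CM :: "nat \<Rightarrow> nat \<Rightarrow> (nat \<Rightarrow> nat) \<Rightarrow> (nat \<Rightarrow> complex fps mat)
    \<Rightarrow> (nat \<Rightarrow> complex fps mat) \<Rightarrow> bool" where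
  "is_CM n m r X Y \<longleftrightarrow>
     (\<forall>j<n. X j \<in> carrier_mat (r (vsucc n j)) (r j) \<and> Y j \<in> carrier_mat (r j) (r (vsucc n j))) \<and>
     (\<forall>j<n. Y j * X j = fps_X \<cdot>\<^sub>m 1\<^sub>m (r j)) \<and>
     (\<forall>j<n. X (vpred n j) * Y (vpred n j) = fps_X \<cdot>\<^sub>m 1\<^sub>m (r j)) \<and>
     (\<forall>j<n. xpath n r X j m = ypath n r Y j (n - m))"

definition is_hom :: "nat \<Rightarrow> (nat \<Rightarrow> nat) \<Rightarrow> (nat \<Rightarrow> complex fps mat) \<Rightarrow> (nat \<Rightarrow> complex fps mat)
    \<Rightarrow> (nat \<Rightarrow> nat) \<Rightarrow> (nat \<Rightarrow> complex fps mat) \<Rightarrow> (nat \<Rightarrow> complex fps mat)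
    \<Rightarrow> (nat \<Rightarrow> complex fps mat) \<Rightarrow> bool" where
  "is_hom n r X Y s X' Y' f \<longleftrightarrow>
     (\<forall>j<n. f j \<in> carrier_mat (s j) (r j) \<and>
            f (vsucc n j) * X j = X' j * f j \<and>
            f j * Y j = Y' j * f (vsucc n j))"

end

theory Submission
  imports Defs
begin

text \<open>Since \<open>y x = x y = t\<close> and \<open>t\<close> is a non-zerodivisor, every arrow \<open>x\<close> can be
  cancelled on the right after multiplying by \<open>y\<close>. Hence the relation \<open>f\<^sub>j\<^sub>+\<^sub>1 x = x' f\<^sub>j\<close>
  determines \<open>f\<^sub>j\<^sub>+\<^sub>1\<close> from \<open>f\<^sub>j\<close>, so a homomorphism is determined by its component at \<open>v\<close>,
  and the relation \<open>f\<^sub>j y = y' f\<^sub>j\<^sub>+\<^sub>1\<close> is automatic.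
  Conversely, a \<open>Z\<close>-linear map \<open>G\<close> at \<open>v\<close> is transported around the cycle by
  \<open>f\<^sub>j = (x'-path v \<rightarrow> j) G (x-path j \<rightarrow> v)\<close>. By \<open>x\<^sup>m = y\<^sup>n\<^sup>-\<^sup>m\<close> a full \<open>x\<close>-loop equals
  \<open>x\<^sup>n\<^sup>-\<^sup>m y\<^sup>n\<^sup>-\<^sup>m = t\<^sup>n\<^sup>-\<^sup>m\<close>, so this is a homomorphism with \<open>f\<^sub>v = t\<^sup>n\<^sup>-\<^sup>m G\<close>. Thus the image
  of the restriction contains \<open>t\<^sup>n\<^sup>-\<^sup>m Hom\<^sub>Z(e\<^sub>vM, e\<^sub>vN)\<close>, and the cokernel is spanned by the
  matrices with a single entry \<open>t\<^sup>d\<close>, \<open>d < n - m\<close>.\<close>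

lemma smult_one_mat_mult:
  assumes "A \<in> carrier_mat a b"
  shows "(c \<cdot>\<^sub>m 1\<^sub>m a) * A = (c::'a::comm_semiring_1) \<cdot>\<^sub>m A"
  using assms by (subst mult_smult_assoc_mat[of _ a a _ b]) auto

lemma mult_smult_one_mat:
  assumes "A \<in> carrier_mat a b"
  shows "A * (c \<cdot>\<^sub>m 1\<^sub>m b) = (c::'a::comm_semiring_1) \<cdot>\<^sub>m A"
  using assms by (subst mult_smult_distrib[of _ a b _ b]) auto

lemma smult_mat_cancel:
  assumes "A \<in> carrier_mat a b" and "B \<in> carrier_mat a b" and "(c::'a::idom) \<noteq> 0"
    and "c \<cdot>\<^sub>m A = c \<cdot>\<^sub>m B"
  shows "A = B"
proof (rule eq_matI)
  fix i j assume ij: "i < dim_row B" "j < dim_col B"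
  then have "(c \<cdot>\<^sub>m A) $$ (i, j) = (c \<cdot>\<^sub>m B) $$ (i, j)" using assms(4) by simp
  then show "A $$ (i, j) = B $$ (i, j)" using assms(1-3) ij by auto
qed (use assms in auto)

lemma mult_mat_right_cancel:
  assumes X: "X \<in> carrier_mat p q" and Y: "Y \<in> carrier_mat q p"
    and XY: "X * Y = c \<cdot>\<^sub>m 1\<^sub>m p" and c: "(c::'a::idom) \<noteq> 0"
    and A: "A \<in> carrier_mat a p" and B: "B \<in> carrier_mat a p" and eq: "A * X = B * X"
  shows "A = B"
proof -
  have "c \<cdot>\<^sub>m A = A * (X * Y)" using A XY by (simp add: mult_smult_one_mat)
  also have "\<dots> = (A * X) * Y" using assoc_mult_mat[OF A X Y] by simp
  also have "\<dots> = B * (X * Y)" using assoc_mult_mat[OF B X Y] eq by simp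
  also have "\<dots> = c \<cdot>\<^sub>m B" using B XY by (simp add: mult_smult_one_mat)
  finally show ?thesis by (rule smult_mat_cancel[OF A B c])
qed

lemma assoc_mult_mat_dims:
  assumes "dim_col A = dim_row B" and "dim_col B = dim_row C"
  shows "A * B * C = A * (B * (C :: 'a::semiring_0 mat))"
  using assms by (intro assoc_mult_mat[of A "dim_row A" "dim_col A" B "dim_col B" C "dim_col C"]) auto

lemma vsucc_mod: "vsucc n (a mod n) = Suc a mod n"
  unfolding vsucc_def by (simp add: mod_Suc_eq)

lemma vpred_vsucc:
  assumes "a < n"
  shows "vpred n (vsucc n a) = a"
proof -
  have "vpred n (vsucc n a) = (a + 1 + (n - 1)) mod n"
    unfolding vpred_def vsucc_def by (rule mod_add_left_eq)
  also have "a + 1 + (n - 1) = a + n" using assms by simp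
  finally show ?thesis using assms by simp
qed

lemma vsucc_less: "j < n \<Longrightarrow> vsucc n j < n"
  unfolding vsucc_def by simp

lemma mod_offset_inverse:
  fixes k n v :: nat
  assumes "k < n" and "v < n"
  shows "((v + k) mod n + n - v) mod n = k"
proof (cases "v + k < n")
  case False
  then have "(v + k) mod n = v + k - n" using assms by (simp add: mod_if)
  then show ?thesis using False assms by simp
qed (use assms in simp)

lemma offset_mod_inverse:
  fixes j n v :: nat
  assumes "j < n" and "v < n"
  shows "(v + (j + n - v) mod n) mod n = j"
proof -
  have "(v + (j + n - v) mod n) mod n = (v + (j + n - v)) mod n" by (simp add: mod_add_right_eq)
  also have "v + (j + n - v) = j + n" using assms by simp
  finally show ?thesis using assms by simp
qed

lemma is_CM_X_carrier:
  "is_CM n m r X Y \<Longrightarrow> j < n \<Longrightarrow> X j \<in> carrier_mat (r (vsucc n j)) (r j)"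
  unfolding is_CM_def by blast

lemma is_CM_Y_carrier:
  "is_CM n m r X Y \<Longrightarrow> j < n \<Longrightarrow> Y j \<in> carrier_mat (r j) (r (vsucc n j))"
  unfolding is_CM_def by blast

lemma is_CM_Y_X: "is_CM n m r X Y \<Longrightarrow> j < n \<Longrightarrow> Y j * X j = fps_X \<cdot>\<^sub>m 1\<^sub>m (r j)"
  unfolding is_CM_def by blast

lemma is_CM_X_Y:
  assumes "is_CM n m r X Y" and "j < n"
  shows "X j * Y j = fps_X \<cdot>\<^sub>m 1\<^sub>m (r (vsucc n j))"
proof -
  have "X (vpred n (vsucc n j)) * Y (vpred n (vsucc n j)) = fps_X \<cdot>\<^sub>m 1\<^sub>m (r (vsucc n j))"
    using assms(1) vsucc_less[OF assms(2)] unfolding is_CM_def by blast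
  then show ?thesis using vpred_vsucc[OF assms(2)] by simp
qed

lemma xpath_carrier:
  assumes cm: "is_CM n m r X Y" and j: "j < n"
  shows "xpath n r X j k \<in> carrier_mat (r ((j + k) mod n)) (r j)"
proof (induction k)
  case 0
  show ?case using j by simp
next
  case (Suc k)
  have "X ((j + k) mod n) \<in> carrier_mat (r ((j + Suc k) mod n)) (r ((j + k) mod n))"
    using is_CM_X_carrier[OF cm, of "(j + k) mod n"] j by (simp add: vsucc_mod)
  with Suc show ?case by simp
qed

lemma xpath_add:
  assumes cm: "is_CM n m r X Y" and j: "j < n"
  shows "xpath n r X j (a + b) = xpath n r X ((j + a) mod n) b * xpath n r X j a"
proof (induction b)
  case 0
  show ?case using xpath_carrier[OF assms, of a] by simp
next
  case (Suc b)
  have ja: "(j + a) mod n < n" using j by simp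
  have shift: "((j + a) mod n + b) mod n = (j + (a + b)) mod n"
    by (simp add: mod_add_left_eq add.assoc)
  have "X ((j + (a + b)) mod n)
      \<in> carrier_mat (r (vsucc n ((j + (a + b)) mod n))) (r ((j + (a + b)) mod n))"
    using is_CM_X_carrier[OF cm] j by simp
  moreover have "xpath n r X ((j + a) mod n) b
      \<in> carrier_mat (r ((j + (a + b)) mod n)) (r ((j + a) mod n))"
    using xpath_carrier[OF cm ja, of b] shift by simp
  moreover have "xpath n r X j a \<in> carrier_mat (r ((j + a) mod n)) (r j)"
    using xpath_carrier[OF assms] .
  ultimately show ?case using Suc shift by simp
qed

lemma xpath_Suc_right:
  assumes cm: "is_CM n m r X Y" and j: "j < n"
  shows "xpath n r X j (Suc k) = xpath n r X (vsucc n j) k * X j"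
proof -
  have "xpath n r X j (Suc k) = xpath n r X (vsucc n j) k * xpath n r X j 1"
    using xpath_add[OF assms, of 1 k] unfolding vsucc_def by simp
  also have "xpath n r X j 1 = X j" using is_CM_X_carrier[OF assms] j by simp
  finally show ?thesis .
qed

text \<open>The \<open>y\<close>-path of length \<open>k\<close> from \<open>j\<close> ends at \<open>j - k\<close>, written \<open>j + k (n - 1)\<close> modulo \<open>n\<close>.\<close>

lemma vsucc_ypath_index:
  assumes "0 < n"
  shows "vsucc n ((j + Suc k * (n - 1)) mod n) = (j + k * (n - 1)) mod n"
proof -
  have "Suc (j + Suc k * (n - 1)) = j + k * (n - 1) + n" using assms by (cases n) auto
  then have "vsucc n ((j + Suc k * (n - 1)) mod n) = (j + k * (n - 1) + n) mod n"
    by (simp only: vsucc_mod)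
  then show ?thesis by (simp only: mod_add_self2)
qed

lemma ypath_carrier:
  assumes cm: "is_CM n m r X Y" and j: "j < n"
  shows "ypath n r Y j k \<in> carrier_mat (r ((j + k * (n - 1)) mod n)) (r j)"
proof (induction k)
  case 0
  show ?case using j by simp
next
  case (Suc k)
  have "Y ((j + Suc k * (n - 1)) mod n)
      \<in> carrier_mat (r ((j + Suc k * (n - 1)) mod n)) (r ((j + k * (n - 1)) mod n))"
    using is_CM_Y_carrier[OF cm, of "(j + Suc k * (n - 1)) mod n"] vsucc_ypath_index[of n j k] j
    by simp
  with Suc show ?case by simp
qed

lemma xpath_ypath:
  assumes cm: "is_CM n m r X Y" and j: "j < n"
  shows "xpath n r X ((j + k * (n - 1)) mod n) k * ypath n r Y j k = fps_X ^ k \<cdot>\<^sub>m 1\<^sub>m (r j)"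
proof (induction k)
  case 0
  show ?case using j by (auto intro!: eq_matI)
next
  case (Suc k)
  define i where "i = (j + Suc k * (n - 1)) mod n"
  define i' where "i' = (j + k * (n - 1)) mod n"
  have i: "i < n" and i': "i' < n" and succ: "vsucc n i = i'"
    using j vsucc_ypath_index[of n j k] unfolding i_def i'_def by auto
  have P: "xpath n r X i' k \<in> carrier_mat (r ((i' + k) mod n)) (r i')"
    using xpath_carrier[OF cm i'] .
  have Q: "ypath n r Y j k \<in> carrier_mat (r i') (r j)"
    using ypath_carrier[OF cm j] unfolding i'_def .
  have Xi: "X i \<in> carrier_mat (r i') (r i)" and Yi: "Y i \<in> carrier_mat (r i) (r i')"
    using is_CM_X_carrier[OF cm i] is_CM_Y_carrier[OF cm i] succ by simp_all
  have "xpath n r X i (Suc k) * ypath n r Y j (Suc k)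
      = (xpath n r X i' k * X i) * (Y i * ypath n r Y j k)"
    using xpath_Suc_right[OF cm i] succ by (simp add: i_def)
  also have "\<dots> = xpath n r X i' k * (X i * (Y i * ypath n r Y j k))"
    using assoc_mult_mat[OF P Xi mult_carrier_mat[OF Yi Q]] .
  also have "X i * (Y i * ypath n r Y j k) = fps_X \<cdot>\<^sub>m ypath n r Y j k"
    using assoc_mult_mat[OF Xi Yi Q] is_CM_X_Y[OF cm i] succ Q by (simp add: smult_one_mat_mult)
  also have "xpath n r X i' k * (fps_X \<cdot>\<^sub>m ypath n r Y j k)
      = fps_X \<cdot>\<^sub>m (xpath n r X i' k * ypath n r Y j k)"
    using mult_smult_distrib[OF P Q] .
  also have "\<dots> = fps_X ^ Suc k \<cdot>\<^sub>m 1\<^sub>m (r j)"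
    using Suc.IH unfolding i'_def by (auto intro!: eq_matI)
  finally show ?case unfolding i_def .
qed

lemma full_loop_index:
  fixes m n :: nat
  assumes "m < n"
  shows "(j + (n - m) * (n - 1)) mod n = (j + m) mod n"
proof -
  obtain p where n: "n = Suc (m + p)" using less_imp_Suc_add[OF assms] ..
  have "j + (n - m) * (n - 1) = (j + m) + p * n" unfolding n by (simp add: algebra_simps)
  then show ?thesis by (simp only: mod_mult_self1)
qed

lemma xpath_full_loop:
  assumes cm: "is_CM n m r X Y" and mn: "m < n" and j: "j < n"
  shows "xpath n r X j n = fps_X ^ (n - m) \<cdot>\<^sub>m 1\<^sub>m (r j)"
proof -
  have "xpath n r X j n = xpath n r X ((j + m) mod n) (n - m) * xpath n r X j m"
    using xpath_add[OF cm j, of m "n - m"] mn by simp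
  also have "xpath n r X j m = ypath n r Y j (n - m)" using cm j unfolding is_CM_def by blast
  also have "xpath n r X ((j + m) mod n) (n - m) * ypath n r Y j (n - m)
      = fps_X ^ (n - m) \<cdot>\<^sub>m 1\<^sub>m (r j)"
    using xpath_ypath[OF cm j, of "n - m"] unfolding full_loop_index[OF mn] .
  finally show ?thesis .
qed

lemma is_homI:
  assumes cm: "is_CM n m r X Y" and cm': "is_CM n m s X' Y'"
    and f: "\<And>j. j < n \<Longrightarrow> f j \<in> carrier_mat (s j) (r j)"
    and comm: "\<And>j. j < n \<Longrightarrow> f (vsucc n j) * X j = X' j * f j"
  shows "is_hom n r X Y s X' Y' f"
  unfolding is_hom_def
proof (intro allI impI conjI)
  fix j assume j: "j < n"
  let ?j1 = "vsucc n j"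
  have Xj: "X j \<in> carrier_mat (r ?j1) (r j)" and Yj: "Y j \<in> carrier_mat (r j) (r ?j1)"
    using is_CM_X_carrier[OF cm j] is_CM_Y_carrier[OF cm j] .
  have X'j: "X' j \<in> carrier_mat (s ?j1) (s j)" and Y'j: "Y' j \<in> carrier_mat (s j) (s ?j1)"
    using is_CM_X_carrier[OF cm' j] is_CM_Y_carrier[OF cm' j] .
  have fj: "f j \<in> carrier_mat (s j) (r j)" and fj1: "f ?j1 \<in> carrier_mat (s ?j1) (r ?j1)"
    using f j vsucc_less[OF j] by auto
  show "f j \<in> carrier_mat (s j) (r j)" by (rule fj)
  show "f ?j1 * X j = X' j * f j" using comm[OF j] .
  text \<open>The \<open>y\<close>-relation holds after right multiplication by \<open>x\<close>, which is cancellable.\<close>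
  have "(f j * Y j) * X j = fps_X \<cdot>\<^sub>m f j"
    using assoc_mult_mat[OF fj Yj Xj] is_CM_Y_X[OF cm j] fj by (simp add: mult_smult_one_mat)
  also have "\<dots> = (Y' j * X' j) * f j"
    using is_CM_Y_X[OF cm' j] fj by (simp add: smult_one_mat_mult)
  also have "\<dots> = (Y' j * f ?j1) * X j"
    using assoc_mult_mat[OF Y'j X'j fj] assoc_mult_mat[OF Y'j fj1 Xj] comm[OF j] by simp
  finally show "f j * Y j = Y' j * f ?j1"
    using mult_mat_right_cancel[OF Xj Yj is_CM_X_Y[OF cm j] fps_X_neq_zero]
      mult_carrier_mat[OF fj Yj] mult_carrier_mat[OF Y'j fj1] by blast
qed

lemma hom_eq_vsucc:
  assumes cm: "is_CM n m r X Y"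
    and f: "is_hom n r X Y s X' Y' f" and g: "is_hom n r X Y s X' Y' g"
    and j: "j < n" and eq: "f j = g j"
  shows "f (vsucc n j) = g (vsucc n j)"
proof (rule mult_mat_right_cancel[OF is_CM_X_carrier[OF cm j] is_CM_Y_carrier[OF cm j]
      is_CM_X_Y[OF cm j] fps_X_neq_zero])
  show "f (vsucc n j) \<in> carrier_mat (s (vsucc n j)) (r (vsucc n j))"
    and "g (vsucc n j) \<in> carrier_mat (s (vsucc n j)) (r (vsucc n j))"
    using f g vsucc_less[OF j] unfolding is_hom_def by blast+
  show "f (vsucc n j) * X j = g (vsucc n j) * X j"
    using f g j eq unfolding is_hom_def by metis
qed

lemma hom_eq_if_eq_at_vertex:
  assumes cm: "is_CM n m r X Y"
    and f: "is_hom n r X Y s X' Y' f" and g: "is_hom n r X Y s X' Y' g"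
    and v: "v < n" and eq: "f v = g v" and j: "j < n"
  shows "f j = g j"
proof -
  have "f ((v + k) mod n) = g ((v + k) mod n)" for k
  proof (induction k)
    case 0
    show ?case using eq v by simp
  next
    case (Suc k)
    then show ?case using hom_eq_vsucc[OF cm f g, of "(v + k) mod n"] v by (simp add: vsucc_mod)
  qed
  from this[of "(j + n - v) mod n"] show ?thesis unfolding offset_mod_inverse[OF j v] .
qed


text \<open>\<open>(j + n - v) mod n\<close> is the length of the \<open>x\<close>-path from \<open>v\<close> to \<open>j\<close>.\<close>

definition transport_hom :: "nat \<Rightarrow> (nat \<Rightarrow> nat) \<Rightarrow> (nat \<Rightarrow> 'a::semiring_1 mat) \<Rightarrow> (nat \<Rightarrow> nat)
    \<Rightarrow> (nat \<Rightarrow> 'a mat) \<Rightarrow> nat \<Rightarrow> 'a mat \<Rightarrow> nat \<Rightarrow> 'a mat" where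
  "transport_hom n r X s X' v G j =
     (let k = (j + n - v) mod n in xpath n s X' v k * G * xpath n r X j (n - k))"

lemma xpath_return_carrier:
  assumes cm: "is_CM n m r X Y" and v: "v < n" and k: "k \<le> n"
  shows "xpath n r X ((v + k) mod n) (n - k) \<in> carrier_mat (r v) (r ((v + k) mod n))"
proof -
  have "((v + k) mod n + (n - k)) mod n = (v + k + (n - k)) mod n" by (rule mod_add_left_eq)
  also have "v + k + (n - k) = v + n" using k by simp
  finally have "((v + k) mod n + (n - k)) mod n = v" using v by simp
  then show ?thesis using xpath_carrier[OF cm, of "(v + k) mod n" "n - k"] v by simp
qed

lemma transport_hom_at_vertex:
  assumes cm: "is_CM n m r X Y" and mn: "m < n" and v: "v < n"
    and G: "G \<in> carrier_mat (s v) (r v)"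
  shows "transport_hom n r X s X' v G v = fps_X ^ (n - m) \<cdot>\<^sub>m G"
  using xpath_full_loop[OF cm mn v] G v by (simp add: transport_hom_def mult_smult_one_mat)

lemma transport_hom_offset:
  assumes cm: "is_CM n m r X Y" and cm': "is_CM n m s X' Y'" and mn: "m < n" and v: "v < n"
    and G: "G \<in> carrier_mat (s v) (r v)" and k: "k \<le> n"
  shows "transport_hom n r X s X' v G ((v + k) mod n)
       = xpath n s X' v k * G * xpath n r X ((v + k) mod n) (n - k)"
proof (cases "k < n")
  case True
  then show ?thesis using mod_offset_inverse[OF True v] by (simp add: transport_hom_def)
next
  case False
  then have "k = n" using k by simp
  then show ?thesis
    using transport_hom_at_vertex[where s = s and X' = X', OF cm mn v G] xpath_full_loop[OF cm' mn v] G v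
    by (simp add: smult_one_mat_mult)
qed

lemma is_hom_transport_hom:
  assumes cm: "is_CM n m r X Y" and cm': "is_CM n m s X' Y'" and mn: "m < n" and v: "v < n"
    and G: "G \<in> carrier_mat (s v) (r v)"
  shows "is_hom n r X Y s X' Y' (transport_hom n r X s X' v G)"
proof (rule is_homI[OF cm cm'])
  let ?f = "transport_hom n r X s X' v G"
  fix j assume j: "j < n"
  define k where "k = (j + n - v) mod n"
  have k: "k < n" and jk: "j = (v + k) mod n"
    using offset_mod_inverse[OF j v] j unfolding k_def by auto
  have P: "xpath n s X' v k \<in> carrier_mat (s j) (s v)"
    using xpath_carrier[OF cm' v] jk by simp
  have Q: "xpath n r X j (n - k) \<in> carrier_mat (r v) (r j)"
    using xpath_return_carrier[OF cm v, of k] k jk by simp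
  have fj: "?f j = xpath n s X' v k * G * xpath n r X j (n - k)"
    using transport_hom_offset[OF cm cm' mn v G, of k] k jk by simp
  show "?f j \<in> carrier_mat (s j) (r j)" using fj P G Q by simp
  have succ: "vsucc n j = (v + Suc k) mod n" using jk by (simp add: vsucc_mod)
  have Q1: "xpath n r X (vsucc n j) (n - Suc k) \<in> carrier_mat (r v) (r (vsucc n j))"
    using xpath_return_carrier[OF cm v, of "Suc k"] k succ by simp
  have Xj: "X j \<in> carrier_mat (r (vsucc n j)) (r j)"
    and X'j: "X' j \<in> carrier_mat (s (vsucc n j)) (s j)"
    using is_CM_X_carrier[OF cm j] is_CM_X_carrier[OF cm' j] .
  have "?f (vsucc n j) = xpath n s X' v (Suc k) * G * xpath n r X (vsucc n j) (n - Suc k)"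
    using transport_hom_offset[OF cm cm' mn v G, of "Suc k"] k succ by simp
  also have "xpath n s X' v (Suc k) = X' j * xpath n s X' v k" using jk by simp
  finally have "?f (vsucc n j) * X j
      = X' j * (xpath n s X' v k * G * (xpath n r X (vsucc n j) (n - Suc k) * X j))"
    using P G Q1 Xj X'j by (simp add: assoc_mult_mat_dims)
  also have "xpath n r X (vsucc n j) (n - Suc k) * X j = xpath n r X j (n - k)"
    using xpath_Suc_right[OF cm j, of "n - Suc k"] k by (simp add: Suc_diff_Suc)
  finally show "?f (vsucc n j) * X j = X' j * ?f j" unfolding fj .
qed

definition single_entry_mat :: "nat \<Rightarrow> nat \<Rightarrow> nat \<Rightarrow> nat \<Rightarrow> 'a::zero \<Rightarrow> 'a mat" where
  "single_entry_mat a b p q x = mat a b (\<lambda>ij. if ij = (p, q) then x else 0)"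

lemma fps_cutoff_eq_sum: "fps_cutoff N f = (\<Sum>d<N. fps_const (fps_nth f d) * fps_X ^ d)"
  by (simp add: fps_eq_iff fps_sum_nth fps_X_power_nth if_distrib cong del: if_weak_cong)

lemma fps_const_sum: "fps_const (sum f A) = (\<Sum>x\<in>A. fps_const (f x :: 'a::comm_ring_1))"
  by (induction A rule: infinite_finite_induct)
    (simp_all del: fps_const_add add: fps_const_add[symmetric])

lemma sum_if_const_cond: "(\<Sum>x\<in>A. if P then f x else 0) = (if P then sum f A else 0)"
  by simp

lemma sum_single_entry_mat:
  assumes "i < a" and "k < b"
  shows "(\<Sum>(p, q, d)\<in>{..<a} \<times> {..<b} \<times> {..<N}.
            h p q d * single_entry_mat a b p q (x d) $$ (i, k))
       = (\<Sum>d<N. h i k d * (x d :: 'a::comm_semiring_1))"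
proof -
  have "h p q d * single_entry_mat a b p q (x d) $$ (i, k)
      = (if i = p then if k = q then h p q d * x d else 0 else 0)" for p q d
    using assms by (simp add: single_entry_mat_def)
  then show ?thesis using assms by (simp add: sum_if_const_cond flip: sum.cartesian_product)
qed

lemma fps_mat_finite_span_mod_X_power:
  "\<exists>B. finite B \<and> B \<subseteq> carrier_mat a b \<and>
    (\<forall>g \<in> carrier_mat a b. \<exists>c. \<forall>i<a. \<forall>k<b.
       g $$ (i, k) = fps_X ^ N * fps_shift N (g $$ (i, k))
         + (\<Sum>x\<in>B. fps_const (c x :: 'a::comm_ring_1) * x $$ (i, k)))"
proof -
  define I where "I = {..<a} \<times> {..<b} \<times> {..<N}"
  define E where "E = (\<lambda>(p, q, d). single_entry_mat a b p q (fps_X ^ d :: 'a fps))"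
  have "finite (E ` I)" and "E ` I \<subseteq> carrier_mat a b"
    unfolding I_def E_def single_entry_mat_def by auto
  moreover have "\<exists>c. \<forall>i<a. \<forall>k<b. g $$ (i, k) = fps_X ^ N * fps_shift N (g $$ (i, k))
      + (\<Sum>x\<in>E ` I. fps_const (c x) * x $$ (i, k))" for g :: "'a fps mat"
  proof (intro exI allI impI)
    define coeff where "coeff = (\<lambda>(p, q, d). fps_nth (g $$ (p, q)) d)"
    fix i k assume ik: "i < a" "k < b"
    have "(\<Sum>x\<in>E ` I. fps_const (\<Sum>y\<in>{y\<in>I. E y = x}. coeff y) * x $$ (i, k))
        = (\<Sum>x\<in>E ` I. \<Sum>y\<in>{y\<in>I. E y = x}. fps_const (coeff y) * E y $$ (i, k))"
      by (simp add: fps_const_sum sum_distrib_right)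
    also have "\<dots> = (\<Sum>y\<in>I. fps_const (coeff y) * E y $$ (i, k))"
      by (rule sum.image_gen[symmetric]) (simp add: I_def)
    also have "\<dots> = (\<Sum>d<N. fps_const (fps_nth (g $$ (i, k)) d) * fps_X ^ d)"
      unfolding I_def E_def coeff_def using sum_single_entry_mat[OF ik]
      by (simp add: case_prod_unfold)
    also have "\<dots> = fps_cutoff N (g $$ (i, k))" by (rule fps_cutoff_eq_sum[symmetric])
    finally show "g $$ (i, k) = fps_X ^ N * fps_shift N (g $$ (i, k))
        + (\<Sum>x\<in>E ` I. fps_const (\<Sum>y\<in>{y\<in>I. E y = x}. coeff y) * x $$ (i, k))"
      using fps_shift_cutoff'[of N "g $$ (i, k)"] by simp
  qed
  ultimately show ?thesis by blast
qed

lemma hom_restriction_finite_cokernel: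
  assumes cm: "is_CM n m r X Y" and cm': "is_CM n m s X' Y'" and mn: "m < n" and v: "v < n"
  shows "\<exists>B. finite B \<and> B \<subseteq> carrier_mat (s v) (r v) \<and>
    (\<forall>g \<in> carrier_mat (s v) (r v). \<exists>f c. is_hom n r X Y s X' Y' f \<and>
      (\<forall>i < s v. \<forall>k < r v.
         g $$ (i, k) = f v $$ (i, k) + (\<Sum>b\<in>B. fps_const (c b :: complex) * b $$ (i, k))))"
proof -
  obtain B :: "complex fps mat set" where B: "finite B" "B \<subseteq> carrier_mat (s v) (r v)"
    and span: "\<forall>g \<in> carrier_mat (s v) (r v). \<exists>c. \<forall>i < s v. \<forall>k < r v.
      g $$ (i, k) = fps_X ^ (n - m) * fps_shift (n - m) (g $$ (i, k))
        + (\<Sum>b\<in>B. fps_const (c b) * b $$ (i, k))"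
    using fps_mat_finite_span_mod_X_power[of "s v" "r v" "n - m"] by blast
  have "\<exists>f c. is_hom n r X Y s X' Y' f \<and> (\<forall>i < s v. \<forall>k < r v.
      g $$ (i, k) = f v $$ (i, k) + (\<Sum>b\<in>B. fps_const (c b) * b $$ (i, k)))"
    if g: "g \<in> carrier_mat (s v) (r v)" for g
  proof -
    let ?G = "map_mat (fps_shift (n - m)) g"
    let ?f = "transport_hom n r X s X' v ?G"
    have G: "?G \<in> carrier_mat (s v) (r v)" using g by simp
    obtain c where c: "\<forall>i < s v. \<forall>k < r v. g $$ (i, k)
        = fps_X ^ (n - m) * fps_shift (n - m) (g $$ (i, k))
          + (\<Sum>b\<in>B. fps_const (c b) * b $$ (i, k))"
      using span g by blast
    have "?f v $$ (i, k) = fps_X ^ (n - m) * fps_shift (n - m) (g $$ (i, k))"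
      if "i < s v" and "k < r v" for i k
      using that carrier_matD[OF g] transport_hom_at_vertex[where s = s and X' = X', OF cm mn v G]
      by simp
    with c have "\<forall>i < s v. \<forall>k < r v.
        g $$ (i, k) = ?f v $$ (i, k) + (\<Sum>b\<in>B. fps_const (c b) * b $$ (i, k))"
      by simp
    with is_hom_transport_hom[OF cm cm' mn v G] show ?thesis by blast
  qed
  with B show ?thesis by blast
qed

theorem lemma5p2:
  fixes n m v :: nat and r s :: "nat \<Rightarrow> nat"
    and X Y X' Y' :: "nat \<Rightarrow> complex fps mat"
  assumes "1 \<le> m" and "m < n" and "v < n"
    and "is_CM n m r X Y" and "is_CM n m s X' Y'"
  shows "(\<forall>f g. is_hom n r X Y s X' Y' f \<longrightarrow> is_hom n r X Y s X' Y' g \<longrightarrow>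
                f v = g v \<longrightarrow> (\<forall>j<n. f j = g j))
       \<and> (\<exists>B. finite B \<and> B \<subseteq> carrier_mat (s v) (r v) \<and>
            (\<forall>g \<in> carrier_mat (s v) (r v). \<exists>f c. is_hom n r X Y s X' Y' f \<and>
                (\<forall>i < s v. \<forall>k < r v.
                   g $$ (i, k) = f v $$ (i, k) + (\<Sum>b\<in>B. fps_const (c b :: complex) * b $$ (i, k)))))"
proof (intro conjI allI impI)
  show "f j = g j" if "is_hom n r X Y s X' Y' f" and "is_hom n r X Y s X' Y' g"
    and "f v = g v" and "j < n" for f g j
    using hom_eq_if_eq_at_vertex[OF assms(4) that(1,2) assms(3) that(3,4)] .
qed (rule hom_restriction_finite_cokernel[OF assms(4,5,2,3)])

end
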